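(* Let $c\ge2$ and let $F$ be a standard $c$-coloring with associated partially looped coloring $E_F$. Then for every color $i\in[c]$: every embedding of $K^i_{\max(c+1,6)}$ into $E_F$ maps all vertices to a single vertex of $E_F$; and every embedding of $K_3^i$ into $E_F$ whose image contains a vertex of $\mathcal X_F$ maps all three vertices to a single vertex.
   Context: A $c$-coloring $F$ is a map from the $2$-subsets of a finite set $V(F)$ to $[c]$. $F$ is standard if it contains no induced copy of any coloring in $\hat K_{3,1}$ or $\hat K_{3,3}$, where: $\hat K_{3,1}$ is the family of $4$-vertex colorings consisting of a monochromatic triangle of color $a$ plus a vertex joined to it by either (two edges of color $a$ and one of color $b\ne a$), or (three edges of three distinct colors, one being $a$), or (two edges of color $b$ and one of color $d$, with $a,b,d$ distinct); $\hat K_{3,3}$ is the family of $6$-vertex colorings consisting of two disjoint triangles monochromatic in colors $a,b$ with all nine edges between them of color $d$, $a,b,d$ distinct. $\mathcal X_F$ is the set of inclusion-maximal vertex sets of size at least $\max(c+1,6)$ all of whose pairs have one color; $Y_F=\{\{y\}: y\in V(F)\setminus\bigcup_{X\in\mathcal X_F}X\}$. (For standard $F$, for each $X\in\mathcal X_F$ and $y$ outside $X$ all but at most one edge of $y\ast X$ have a common color, and between distinct $X_1,X_2\in\mathcal X_F$ all but a matching or a star-free remainder of $X_1\ast X_2$ have a common color; so the majority color below is well defined.) $E_F$ is the coloring on vertex set $\mathcal X_F\sqcup Y_F$ of pairs $\{v_1,v_2\}$ given by: no loop at elements of $Y_F$; $E_F(\{\{y_1\},\{y_2\}\})=F(\{y_1,y_2\})$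 for distinct elements of $Y_F$; the loop at $X\in\mathcal X_F$ gets the color of $F[X]$; every other pair $\{v_1,v_2\}$ gets the majority color among the edges of $v_1\ast v_2$ in $F$. A map $\varphi:[t]\to V(E_F)$ embeds $K_t^i$ (all edges color $i$) if $E_F(\{\varphi(u),\varphi(w)\})$ is defined and equals $i$ for all distinct $u,w\in[t]$ (in particular two vertices may share an image only if that image has a loop of color $i$). *)

theory Defs
  imports Main
begin

text \<open>A c-coloring: a finite vertex set V and a map F from 2-subsets of V to {1..c}.
  Values of F on other sets are irrelevant.\<close>
definition coloring :: "nat \<Rightarrow> 'a set \<Rightarrow> ('a set \<Rightarrow> nat) \<Rightarrow> bool" where
  "coloring c V F \<longleftrightarrow> finite V \<and> (\<forall>e. e \<subseteq> V \<and> card e = 2 \<longrightarrow> F e \<in> {1..c})"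

text \<open>Induced copy of a member of the family K-hat(3,1): monochromatic triangle x1 x2 x3
  of colour a, plus a vertex y whose three edges to the triangle have one of the three
  forbidden colour patterns (orderings of the triangle vertices are covered by the
  existential quantifier).\<close>
definition has_K31 :: "'a set \<Rightarrow> ('a set \<Rightarrow> nat) \<Rightarrow> bool" where
  "has_K31 V F \<longleftrightarrow> (\<exists>x1 x2 x3 y a.
     x1 \<in> V \<and> x2 \<in> V \<and> x3 \<in> V \<and> y \<in> V \<and> distinct [x1, x2, x3, y] \<and>
     F {x1, x2} = a \<and> F {x1, x3} = a \<and> F {x2, x3} = a \<and>
     ((F {y, x1} = a \<and> F {y, x2} = a \<and> F {y, x3} \<noteq> a) \<or>
      (F {y, x1} = a \<and> distinct [a, F {y, x2}, F {y, x3}]) \<or>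
      (F {y, x1} = F {y, x2} \<and> distinct [a, F {y, x1}, F {y, x3}])))"

definition has_K33 :: "'a set \<Rightarrow> ('a set \<Rightarrow> nat) \<Rightarrow> bool" where
  "has_K33 V F \<longleftrightarrow> (\<exists>x1 x2 x3 z1 z2 z3 a b d.
     x1 \<in> V \<and> x2 \<in> V \<and> x3 \<in> V \<and> z1 \<in> V \<and> z2 \<in> V \<and> z3 \<in> V \<and>
     distinct [x1, x2, x3, z1, z2, z3] \<and> distinct [a, b, d] \<and>
     F {x1, x2} = a \<and> F {x1, x3} = a \<and> F {x2, x3} = a \<and>
     F {z1, z2} = b \<and> F {z1, z3} = b \<and> F {z2, z3} = b \<and>
     (\<forall>x\<in>{x1, x2, x3}. \<forall>z\<in>{z1, z2, z3}. F {x, z} = d))"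

definition standard :: "nat \<Rightarrow> 'a set \<Rightarrow> ('a set \<Rightarrow> nat) \<Rightarrow> bool" where
  "standard c V F \<longleftrightarrow> coloring c V F \<and> \<not> has_K31 V F \<and> \<not> has_K33 V F"

definition mono_set :: "('a set \<Rightarrow> nat) \<Rightarrow> 'a set \<Rightarrow> bool" where
  "mono_set F X \<longleftrightarrow> (\<exists>i. \<forall>e. e \<subseteq> X \<and> card e = 2 \<longrightarrow> F e = i)"

definition set_color :: "('a set \<Rightarrow> nat) \<Rightarrow> 'a set \<Rightarrow> nat" where
  "set_color F X = (THE i. \<forall>e. e \<subseteq> X \<and> card e = 2 \<longrightarrow> F e = i)"

definition XF :: "nat \<Rightarrow> 'a set \<Rightarrow> ('a set \<Rightarrow> nat) \<Rightarrow> 'a set set" where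
  "XF c V F = {X. X \<subseteq> V \<and> card X \<ge> max (c + 1) 6 \<and> mono_set F X \<and>
      (\<forall>Y. X \<subset> Y \<and> Y \<subseteq> V \<and> card Y \<ge> max (c + 1) 6 \<and> mono_set F Y \<longrightarrow> False)}"

definition YF :: "nat \<Rightarrow> 'a set \<Rightarrow> ('a set \<Rightarrow> nat) \<Rightarrow> 'a set set" where
  "YF c V F = {{y} | y. y \<in> V \<and> y \<notin> \<Union>(XF c V F)}"

text \<open>Vertex set of E_F (X_F and Y_F are disjoint since members of X_F have size at least 6).\<close>
definition VE :: "nat \<Rightarrow> 'a set \<Rightarrow> ('a set \<Rightarrow> nat) \<Rightarrow> 'a set set" where
  "VE c V F = XF c V F \<union> YF c V F"

definition cross_count :: "('a set \<Rightarrow> nat) \<Rightarrow> 'a set \<Rightarrow> 'a set \<Rightarrow> nat \<Rightarrow> nat" where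
  "cross_count F v1 v2 j = card {e. \<exists>x\<in>v1. \<exists>y\<in>v2. x \<noteq> y \<and> e = {x, y} \<and> F e = j}"

definition maj_color :: "nat \<Rightarrow> ('a set \<Rightarrow> nat) \<Rightarrow> 'a set \<Rightarrow> 'a set \<Rightarrow> nat option" where
  "maj_color c F v1 v2 =
     (if \<exists>j\<in>{1..c}. \<forall>k\<in>{1..c}. k \<noteq> j \<longrightarrow> cross_count F v1 v2 k < cross_count F v1 v2 j
      then Some (THE j. j \<in> {1..c} \<and>
              (\<forall>k\<in>{1..c}. k \<noteq> j \<longrightarrow> cross_count F v1 v2 k < cross_count F v1 v2 j))
      else None)"

text \<open>The partially looped coloring E_F (None = undefined, e.g. no loop at Y_F elements).\<close>
definition EF :: "nat \<Rightarrow> 'a set \<Rightarrow> ('a set \<Rightarrow> nat) \<Rightarrow> 'a set \<Rightarrow> 'a set \<Rightarrow> nat option" where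
  "EF c V F v1 v2 =
     (if v1 = v2 then (if v1 \<in> XF c V F then Some (set_color F v1) else None)
      else if v1 \<in> YF c V F \<and> v2 \<in> YF c V F then Some (F (v1 \<union> v2))
      else maj_color c F v1 v2)"

definition embeds :: "nat \<Rightarrow> 'a set \<Rightarrow> ('a set \<Rightarrow> nat) \<Rightarrow> nat \<Rightarrow> nat \<Rightarrow> (nat \<Rightarrow> 'a set) \<Rightarrow> bool" where
  "embeds c V F t i \<phi> \<longleftrightarrow> (\<forall>u\<in>{1..t}. \<phi> u \<in> VE c V F) \<and>
     (\<forall>u\<in>{1..t}. \<forall>w\<in>{1..t}. u \<noteq> w \<longrightarrow> EF c V F (\<phi> u) (\<phi> w) = Some i)"

end

theory Submission
  imports Defs
begin

text \<open>
  Let \<open>X\<close> be a maximal monochromatic set of colour \<open>a\<close> and \<open>y\<notin>X\<close>. Two \<open>a\<close>-edges from \<open>y\<close> to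
  \<open>X\<close> would, by the forbidden \<open>K(3,1)\<close> patterns, make all edges from \<open>y\<close> to \<open>X\<close> \<open>a\<close>-coloured,
  contradicting maximality; two edges of an equal colour \<open>d \<noteq> a\<close> force every other edge to have
  colour \<open>d\<close> or \<open>a\<close>; and since \<open>|X| > c\<close>, pigeonhole produces such a pair. So \<open>y\<close> sees all but
  at most one vertex of \<open>X\<close> in one colour \<open>d \<noteq> a\<close>. Running this argument from both sides of two
  members \<open>X\<^sub>1, X\<^sub>2\<close> of \<open>X\<^sub>F\<close> shows that all but at most one vertex of \<open>X\<^sub>2\<close> sees \<open>X\<^sub>1\<close> in this way
  in one common colour \<open>D\<close>, which is then the majority colour by counting.

  Thus an \<open>E\<^sub>F\<close>-edge of colour \<open>i\<close> at \<open>X\<close> means that almost every vertex on the other side is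
  joined to almost all of \<open>X\<close> in colour \<open>i \<noteq> a\<close>. A non-degenerate \<open>i\<close>-triangle through \<open>X\<close> then
  yields an \<open>i\<close>-edge \<open>y\<^sub>q y\<^sub>r\<close> and two vertices \<open>x, x'\<close> of \<open>X\<close> joined to both in colour \<open>i\<close>, while
  \<open>x x'\<close> has colour \<open>a\<close>: a forbidden \<open>K(3,1)\<close>. A clique of size \<open>max (c+1) 6\<close> avoiding \<open>X\<^sub>F\<close>
  consists of distinct singletons of \<open>Y\<^sub>F\<close>, i.e. a large monochromatic set of \<open>F\<close> not covered
  by \<open>X\<^sub>F\<close>, which is impossible.
\<close>

section \<open>Counting edges between vertex sets\<close>

lemma cross_count_commute: "cross_count F v1 v2 j = cross_count F v2 v1 j"
proof -
  have "{e. \<exists>x\<in>v1. \<exists>y\<in>v2. x \<noteq> y \<and> e = {x, y} \<and> F e = j}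
      = {e. \<exists>x\<in>v2. \<exists>y\<in>v1. x \<noteq> y \<and> e = {x, y} \<and> F e = j}"
    by (auto, (metis insert_commute)+)
  then show ?thesis unfolding cross_count_def by simp
qed

lemma maj_color_commute: "maj_color c F v1 v2 = maj_color c F v2 v1"
  unfolding maj_color_def cross_count_commute[of F v1] ..

lemma cross_count_eq_card_image:
  "cross_count F v1 v2 j =
     card ((\<lambda>(y, x). {x, y}) ` (SIGMA y:v2. {x\<in>v1. x \<noteq> y \<and> F {x, y} = j}))"
  unfolding cross_count_def by (rule arg_cong[where f = card]) (auto simp: image_iff)

lemma cross_count_le_sum:
  assumes "finite v1" "finite v2"
  shows "cross_count F v1 v2 j \<le> (\<Sum>y\<in>v2. card {x\<in>v1. F {x, y} = j})"
proof -
  have "cross_count F v1 v2 j \<le> card (SIGMA y:v2. {x\<in>v1. x \<noteq> y \<and> F {x, y} = j})"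
    unfolding cross_count_eq_card_image by (rule card_image_le) (use assms in auto)
  also have "\<dots> = (\<Sum>y\<in>v2. card {x\<in>v1. x \<noteq> y \<and> F {x, y} = j})"
    using assms by (simp add: card_SigmaI)
  also have "\<dots> \<le> (\<Sum>y\<in>v2. card {x\<in>v1. F {x, y} = j})"
    using assms by (intro sum_mono card_mono) auto
  finally show ?thesis .
qed

lemma cross_count_disjoint:
  assumes "finite v1" "finite v2" "v1 \<inter> v2 = {}"
  shows "cross_count F v1 v2 j = (\<Sum>y\<in>v2. card {x\<in>v1. F {x, y} = j})"
proof -
  have "inj_on (\<lambda>(y, x). {x, y}) (SIGMA y:v2. {x\<in>v1. x \<noteq> y \<and> F {x, y} = j})"
    using assms(3) by (auto intro!: inj_onI simp: doubleton_eq_iff)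
  then have "cross_count F v1 v2 j = card (SIGMA y:v2. {x\<in>v1. x \<noteq> y \<and> F {x, y} = j})"
    unfolding cross_count_eq_card_image by (rule card_image)
  also have "\<dots> = (\<Sum>y\<in>v2. card {x\<in>v1. x \<noteq> y \<and> F {x, y} = j})"
    using assms by (simp add: card_SigmaI)
  also have "\<dots> = (\<Sum>y\<in>v2. card {x\<in>v1. F {x, y} = j})"
    using assms(3) by (intro sum.cong arg_cong[where f = card]) auto
  finally show ?thesis .
qed

lemma cross_count_mono:
  assumes "finite w1" "finite w2" "v1 \<subseteq> w1" "v2 \<subseteq> w2"
  shows "cross_count F v1 v2 j \<le> cross_count F w1 w2 j"
proof -
  have "finite {e. \<exists>x\<in>w1. \<exists>y\<in>w2. x \<noteq> y \<and> e = {x, y} \<and> F e = j}"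
    by (rule finite_subset[of _ "(\<lambda>(x, y). {x, y}) ` (w1 \<times> w2)"]) (use assms in auto)
  then show ?thesis
    unfolding cross_count_def by (rule card_mono) (use assms(3,4) in blast)
qed

lemma maj_color_eqI:
  assumes "d \<in> {1..c}"
    and "\<forall>k\<in>{1..c}. k \<noteq> d \<longrightarrow> cross_count F v1 v2 k < cross_count F v1 v2 d"
  shows "maj_color c F v1 v2 = Some d"
proof -
  have "(THE j. j \<in> {1..c} \<and>
      (\<forall>k\<in>{1..c}. k \<noteq> j \<longrightarrow> cross_count F v1 v2 k < cross_count F v1 v2 j)) = d"
  proof (rule the_equality)
    fix j
    assume "j \<in> {1..c} \<and>
      (\<forall>k\<in>{1..c}. k \<noteq> j \<longrightarrow> cross_count F v1 v2 k < cross_count F v1 v2 j)"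
    then show "j = d"
      using assms by (metis not_less_iff_gr_or_eq)
  qed (use assms in blast)
  moreover have "\<exists>j\<in>{1..c}. \<forall>k\<in>{1..c}. k \<noteq> j \<longrightarrow> cross_count F v1 v2 k < cross_count F v1 v2 j"
    using assms by blast
  ultimately show ?thesis
    unfolding maj_color_def by presburger
qed

lemma card_less_ex_not_in:
  assumes "finite T" "card T < card S"
  shows "\<exists>x\<in>S. x \<notin> T"
  using assms by (metis card_mono not_le subsetI)

lemma card_ge_2_obtain:
  assumes "2 \<le> card S"
  obtains x y where "x \<in> S" "y \<in> S" "x \<noteq> y"
proof -
  have "finite S" "\<not> card S \<le> Suc 0"
    using assms card.infinite by fastforce+
  then show thesis
    using that card_le_Suc0_iff_eq by blast
qed

definition almost_all :: "'a set \<Rightarrow> 'a set \<Rightarrow> bool" where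
  "almost_all B v \<longleftrightarrow> B \<subseteq> v \<and> B \<noteq> {} \<and> card (v - B) \<le> 1"

lemma almost_all_card:
  assumes "finite v" "almost_all B v"
  shows "card v - 1 \<le> card B"
proof -
  have "card (v - B) = card v - card B"
    using assms unfolding almost_all_def by (meson card_Diff_subset finite_subset)
  then show ?thesis
    using assms unfolding almost_all_def by linarith
qed

lemma almost_all_singleton: "almost_all B {y} \<Longrightarrow> B = {y}"
  unfolding almost_all_def by auto

lemma almost_all_Int:
  assumes "finite v" "card v \<noteq> 2" and B: "almost_all B v" and B': "almost_all B' v"
  shows "B \<inter> B' \<noteq> {}"
proof (cases "card v \<le> 1")
  case True
  obtain b b' where "b \<in> B" "b' \<in> B'"
    using B B' unfolding almost_all_def by blast
  moreover have "b = b'"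
    using True card_le_Suc0_iff_eq[OF assms(1)] B B' calculation unfolding almost_all_def
    by (metis One_nat_def subsetD)
  ultimately show ?thesis by blast
next
  case False
  have "v - B \<inter> B' = (v - B) \<union> (v - B')" by blast
  then have "card (v - B \<inter> B') \<le> 2"
    using B B' card_Un_le[of "v - B" "v - B'"] unfolding almost_all_def by simp
  then show ?thesis
    using False assms(2) by auto
qed

section \<open>Maximal monochromatic sets of a standard coloring\<close>

locale standard_coloring =
  fixes c :: nat and V :: "'a set" and F :: "'a set \<Rightarrow> nat"
  assumes standard: "standard c V F"
begin

lemma finite_V: "finite V"
  using standard unfolding standard_def coloring_def by auto

lemma edge_color_range: "x \<in> V \<Longrightarrow> y \<in> V \<Longrightarrow> x \<noteq> y \<Longrightarrow> F {x, y} \<in> {1..c}"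
  using standard unfolding standard_def coloring_def by auto

lemma no_K31_aab:
  assumes "x1 \<in> V" "x2 \<in> V" "x3 \<in> V" "y \<in> V" "distinct [x1, x2, x3, y]"
    "F {x1, x2} = a" "F {x1, x3} = a" "F {x2, x3} = a"
    "F {y, x1} = a" "F {y, x2} = a" "F {y, x3} \<noteq> a"
  shows False
proof -
  have "has_K31 V F"
    unfolding has_K31_def using assms by (intro exI[of _ x1] exI[of _ x2] exI[of _ x3] exI[of _ y]) simp
  then show False
    using standard unfolding standard_def by simp
qed

lemma no_K31_bbd:
  assumes "x1 \<in> V" "x2 \<in> V" "x3 \<in> V" "y \<in> V" "distinct [x1, x2, x3, y]"
    "F {x1, x2} = a" "F {x1, x3} = a" "F {x2, x3} = a"
    "F {y, x1} = b" "F {y, x2} = b" "distinct [a, b, F {y, x3}]"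
  shows False
proof -
  have "has_K31 V F"
    unfolding has_K31_def using assms by (intro exI[of _ x1] exI[of _ x2] exI[of _ x3] exI[of _ y]) simp
  then show False
    using standard unfolding standard_def by simp
qed

lemma XF_subset: "X \<in> XF c V F \<Longrightarrow> X \<subseteq> V"
  unfolding XF_def by auto

lemma XF_finite: "X \<in> XF c V F \<Longrightarrow> finite X"
  using XF_subset finite_V finite_subset by blast

lemma XF_card: "X \<in> XF c V F \<Longrightarrow> max (c + 1) 6 \<le> card X"
  unfolding XF_def by auto

lemma XF_edge_color:
  assumes X: "X \<in> XF c V F" and "x \<in> X" "y \<in> X" "x \<noteq> y"
  shows "F {x, y} = set_color F X"
proof -
  obtain i where i: "\<forall>e. e \<subseteq> X \<and> card e = 2 \<longrightarrow> F e = i"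
    using X unfolding XF_def mono_set_def by auto
  have xy: "{x, y} \<subseteq> X" "card {x, y} = 2"
    using assms by auto
  have "set_color F X = i"
    unfolding set_color_def by (rule the_equality) (use i xy in metis)+
  then show ?thesis
    using i xy by metis
qed

lemma XF_color_range:
  assumes X: "X \<in> XF c V F"
  shows "set_color F X \<in> {1..c}"
proof -
  have "2 \<le> card X"
    using XF_card[OF X] by simp
  then obtain x y where "x \<in> X" "y \<in> X" "x \<noteq> y"
    by (rule card_ge_2_obtain)
  then show ?thesis
    using XF_edge_color[OF X] edge_color_range XF_subset[OF X] by (metis subsetD)
qed

lemma XF_maximal:
  assumes X: "X \<in> XF c V F" and y: "y \<in> V" "y \<notin> X"
  shows "\<exists>x\<in>X. F {x, y} \<noteq> set_color F X"
proof (rule ccontr)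
  assume "\<not> ?thesis"
  then have "mono_set F (insert y X)"
    unfolding mono_set_def card_2_iff
    using XF_edge_color[OF X] by (auto simp: insert_commute intro!: exI[of _ "set_color F X"])
  moreover have "max (c + 1) 6 \<le> card (insert y X)"
    using XF_card[OF X] XF_finite[OF X] y by (auto simp: max_def)
  moreover have "X \<subset> insert y X" "insert y X \<subseteq> V"
    using y XF_subset[OF X] by auto
  ultimately show False
    using X unfolding XF_def by blast
qed

lemma mono_set_extends_to_XF:
  assumes S: "S \<subseteq> V" "max (c + 1) 6 \<le> card S" "mono_set F S"
  shows "\<exists>X\<in>XF c V F. S \<subseteq> X"
proof -
  define Q where "Q Y \<longleftrightarrow> S \<subseteq> Y \<and> Y \<subseteq> V \<and> max (c + 1) 6 \<le> card Y \<and> mono_set F Y" for Y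
  have "\<forall>Y. Q Y \<longrightarrow> card Y < card V + 1"
    using card_mono[OF finite_V] unfolding Q_def by (simp add: le_imp_less_Suc)
  moreover have "Q S"
    using S unfolding Q_def by auto
  ultimately obtain Y where Y: "Q Y" "\<forall>Y'. Q Y' \<longrightarrow> card Y' \<le> card Y"
    using ex_has_greatest_nat[of Q S card "card V + 1"] by blast
  have "Y \<in> XF c V F"
    unfolding XF_def
  proof (intro CollectI conjI allI impI)
    show "Y \<subseteq> V" "max (c + 1) 6 \<le> card Y" "mono_set F Y"
      using Y(1) unfolding Q_def by auto
    fix Y'
    assume Y': "Y \<subset> Y' \<and> Y' \<subseteq> V \<and> max (c + 1) 6 \<le> card Y' \<and> mono_set F Y'"
    then have "card Y < card Y'"
      using psubset_card_mono finite_subset[OF _ finite_V] by blast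
    moreover have "Q Y'"
      using Y(1) Y' unfolding Q_def by auto
    ultimately show False
      using Y(2) by fastforce
  qed
  then show ?thesis
    using Y(1) unfolding Q_def by blast
qed

lemma XF_outside_own_color_unique:
  assumes X: "X \<in> XF c V F" and y: "y \<in> V" "y \<notin> X"
    and x: "x1 \<in> X" "x2 \<in> X" "F {x1, y} = set_color F X" "F {x2, y} = set_color F X"
  shows "x1 = x2"
proof (rule ccontr)
  assume ne: "x1 \<noteq> x2"
  have "F {x3, y} = set_color F X" if x3: "x3 \<in> X" for x3
  proof (rule ccontr)
    assume x3y: "F {x3, y} \<noteq> set_color F X"
    then have "x3 \<noteq> x1" "x3 \<noteq> x2"
      using x by auto
    then show False
      using no_K31_aab[of x1 x2 x3 y "set_color F X"] XF_edge_color[OF X] XF_subset[OF X]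
        x x3 x3y y ne by (auto simp: insert_commute)
  qed
  then show False
    using XF_maximal[OF X y] by blast
qed

lemma XF_outside_second_color:
  assumes X: "X \<in> XF c V F" and y: "y \<in> V" "y \<notin> X"
    and x: "x1 \<in> X" "x2 \<in> X" "x1 \<noteq> x2" "F {x1, y} = d" "F {x2, y} = d"
    and d: "d \<noteq> set_color F X" and x3: "x3 \<in> X"
  shows "F {x3, y} \<in> {d, set_color F X}"
proof (rule ccontr)
  assume x3y: "F {x3, y} \<notin> {d, set_color F X}"
  then have "x3 \<noteq> x1" "x3 \<noteq> x2"
    using x by auto
  then show False
    using no_K31_bbd[of x1 x2 x3 y "set_color F X" d] XF_edge_color[OF X] XF_subset[OF X]
      x x3 x3y y d by (auto simp: insert_commute)
qed

definition almost_joined :: "'a set \<Rightarrow> 'a \<Rightarrow> nat \<Rightarrow> bool" where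
  "almost_joined X y d \<longleftrightarrow> (\<exists>e. \<forall>x\<in>X - {e}. F {x, y} = d)"

lemma almost_joined_subset: "almost_joined X y d \<Longrightarrow> X' \<subseteq> X \<Longrightarrow> almost_joined X' y d"
  unfolding almost_joined_def by blast

lemma almost_joined_card:
  assumes "finite X" "almost_joined X y d"
  shows "card X - 1 \<le> card {x\<in>X. F {x, y} = d}"
    and "j \<noteq> d \<Longrightarrow> card {x\<in>X. F {x, y} = j} \<le> 1"
proof -
  obtain e where e: "\<forall>x\<in>X - {e}. F {x, y} = d"
    using assms(2) unfolding almost_joined_def by blast
  have "card X - 1 \<le> card (X - {e})"
    using diff_card_le_card_Diff[of "{e}" X] by simp
  also have "\<dots> \<le> card {x\<in>X. F {x, y} = d}"
    using e assms(1) by (intro card_mono) auto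
  finally show "card X - 1 \<le> card {x\<in>X. F {x, y} = d}" .
  assume "j \<noteq> d"
  then have "{x\<in>X. F {x, y} = j} \<subseteq> {e}"
    using e by auto
  then show "card {x\<in>X. F {x, y} = j} \<le> 1"
    using card_mono[of "{e}"] by fastforce
qed

lemma XF_outside_not_almost_joined_own:
  assumes X: "X \<in> XF c V F" and y: "y \<in> V" "y \<notin> X"
  shows "\<not> almost_joined X y (set_color F X)"
proof
  assume "almost_joined X y (set_color F X)"
  then have "2 \<le> card {x\<in>X. F {x, y} = set_color F X}"
    using almost_joined_card(1)[OF XF_finite[OF X]] XF_card[OF X] by fastforce
  then obtain x1 x2 where "x1 \<in> X" "x2 \<in> X" "x1 \<noteq> x2"
    "F {x1, y} = set_color F X" "F {x2, y} = set_color F X"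
    by (rule card_ge_2_obtain) blast
  then show False
    using XF_outside_own_color_unique[OF X y] by blast
qed

lemma almost_joined_common:
  assumes "finite X" "almost_joined X y d" "almost_joined X y' d'"
  shows "card X - 2 \<le> card {x\<in>X. F {x, y} = d \<and> F {x, y'} = d'}"
proof -
  obtain e e' where e: "\<forall>x\<in>X - {e}. F {x, y} = d" and e': "\<forall>x\<in>X - {e'}. F {x, y'} = d'"
    using assms(2,3) unfolding almost_joined_def by blast
  have "card {e, e'} \<le> 2"
    by (cases "e = e'") simp_all
  then have "card X - 2 \<le> card X - card {e, e'}"
    by simp
  also have "\<dots> \<le> card (X - {e, e'})"
    by (rule diff_card_le_card_Diff) simp
  also have "\<dots> \<le> card {x\<in>X. F {x, y} = d \<and> F {x, y'} = d'}"
    using e e' assms(1) by (intro card_mono) auto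
  finally show ?thesis .
qed

lemma XF_outside_vertex:
  assumes X: "X \<in> XF c V F" and y: "y \<in> V" "y \<notin> X"
  obtains d where "d \<noteq> set_color F X" "d \<in> {1..c}" "almost_joined X y d"
    "\<forall>x\<in>X. F {x, y} \<in> {d, set_color F X}"
proof -
  let ?a = "set_color F X"
  define R where "R = {x\<in>X. F {x, y} \<noteq> ?a}"
  have "card (X - R) \<le> 1"
    using XF_outside_own_color_unique[OF X y] card_le_Suc0_iff_eq[of "X - R"] XF_finite[OF X]
    unfolding R_def by auto
  then have "c \<le> card R"
    using XF_card[OF X] card_Diff_subset[of R X] XF_finite[OF X] finite_subset[of R X]
    unfolding R_def by fastforce
  moreover have "(\<lambda>x. F {x, y}) ` R \<subseteq> {1..c} - {?a}"
    using edge_color_range XF_subset[OF X] y unfolding R_def by fastforce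
  ultimately have "\<not> inj_on (\<lambda>x. F {x, y}) R"
    using card_inj_on_le[of "\<lambda>x. F {x, y}" R "{1..c} - {?a}"] XF_color_range[OF X] by fastforce
  then obtain x1 x2 where x12: "x1 \<in> R" "x2 \<in> R" "x1 \<noteq> x2" "F {x1, y} = F {x2, y}"
    unfolding inj_on_def by blast
  define d where "d = F {x1, y}"
  have x1: "x1 \<in> X" "F {x1, y} \<noteq> ?a"
    using x12(1) unfolding R_def by auto
  then have d: "d \<noteq> ?a" "d \<in> {1..c}"
    using edge_color_range[of x1 y] XF_subset[OF X] y unfolding d_def by auto
  have x2: "x2 \<in> X" "F {x2, y} = d"
    using x12 unfolding R_def d_def by auto
  have colors: "\<forall>x\<in>X. F {x, y} \<in> {d, ?a}"
    using XF_outside_second_color[OF X y x1(1) x2(1) x12(3) d_def[symmetric] x2(2) d(1)] by blast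
  have "almost_joined X y d"
  proof (cases "\<exists>e\<in>X. F {e, y} = ?a")
    case True
    then obtain e where "e \<in> X" "F {e, y} = ?a" by blast
    then show ?thesis
      using colors XF_outside_own_color_unique[OF X y] unfolding almost_joined_def by blast
  next
    case False
    then show ?thesis
      using colors unfolding almost_joined_def by blast
  qed
  then show thesis
    using that d colors by blast
qed

lemma XF_not_subset:
  assumes X1: "X1 \<in> XF c V F" and X2: "X2 \<in> XF c V F" and ne: "X1 \<noteq> X2"
  shows "\<exists>y\<in>X2. y \<notin> X1"
proof (rule ccontr)
  assume "\<not> ?thesis"
  then have "X2 \<subset> X1"
    using ne by auto
  then show False
    using X1 X2 unfolding XF_def by blast
qed

lemma XF_Int_card:
  assumes X1: "X1 \<in> XF c V F" and X2: "X2 \<in> XF c V F" and ne: "X1 \<noteq> X2"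
  shows "card (X1 \<inter> X2) \<le> 1"
proof -
  obtain y where y: "y \<in> X2" "y \<notin> X1"
    using XF_not_subset[OF X1 X2 ne] by blast
  have "z1 = z2" if z: "z1 \<in> X1 \<inter> X2" "z2 \<in> X1 \<inter> X2" for z1 z2
  proof (rule ccontr)
    assume "z1 \<noteq> z2"
    then have "set_color F X1 = set_color F X2"
      using XF_edge_color[OF X1] XF_edge_color[OF X2] z by (metis IntD1 IntD2)
    moreover have "y \<noteq> z1" "y \<noteq> z2"
      using y z by auto
    ultimately show False
      using XF_outside_own_color_unique[OF X1 _ y(2), of z1 z2] XF_edge_color[OF X2] XF_subset[OF X2]
        y z \<open>z1 \<noteq> z2\<close> by auto
  qed
  then show ?thesis
    using card_le_Suc0_iff_eq[of "X1 \<inter> X2"] XF_finite[OF X1] by auto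
qed

lemma XF_Diff_card:
  assumes X1: "X1 \<in> XF c V F" and X2: "X2 \<in> XF c V F" and ne: "X1 \<noteq> X2"
  shows "card X1 - 1 \<le> card (X1 - X2)"
  using card_Diff_subset_Int[of X1 X2] XF_Int_card[OF X1 X2 ne] XF_finite[OF X1] by simp

lemma XF_pair_common_vertex:
  assumes X1: "X1 \<in> XF c V F" and X2: "X2 \<in> XF c V F" and ne: "X1 \<noteq> X2"
    and "almost_joined X1 y d" "almost_joined X1 y' d'"
  obtains x where "x \<in> X1 - X2" "F {x, y} = d" "F {x, y'} = d'"
proof -
  have "card (X1 - X2) - 2 \<le> card {x\<in>X1 - X2. F {x, y} = d \<and> F {x, y'} = d'}"
    using assms(4,5) XF_finite[OF X1]
    by (intro almost_joined_common) (auto intro: almost_joined_subset)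
  moreover have "5 \<le> card (X1 - X2)"
    using XF_Diff_card[OF X1 X2 ne] XF_card[OF X1] by simp
  ultimately have "card {x\<in>X1 - X2. F {x, y} = d \<and> F {x, y'} = d'} \<noteq> 0"
    by linarith
  then have "{x\<in>X1 - X2. F {x, y} = d \<and> F {x, y'} = d'} \<noteq> {}"
    by (metis card.empty)
  then show thesis
    using that by blast
qed

lemma XF_overlap_same_color:
  assumes X1: "X1 \<in> XF c V F" and X2: "X2 \<in> XF c V F" and z: "z \<in> X1" "z \<in> X2"
  shows "set_color F X1 = set_color F X2"
proof (rule ccontr)
  let ?a = "set_color F X1" and ?b = "set_color F X2"
  assume ab: "?a \<noteq> ?b"
  then have ne: "X1 \<noteq> X2" by auto
  have own: "almost_joined X1 w ?b" if w: "w \<in> X2 - X1" for w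
  proof -
    obtain d where d: "almost_joined X1 w d" "\<forall>x\<in>X1. F {x, w} \<in> {d, ?a}"
      using XF_outside_vertex[OF X1, of w] w XF_subset[OF X2] by blast
    have "F {z, w} = ?b"
      using XF_edge_color[OF X2] z w by auto
    then show ?thesis
      using d z ab by auto
  qed
  have "2 \<le> card (X2 - X1)"
    using XF_Diff_card[OF X2 X1 ne[symmetric]] XF_card[OF X2] by simp
  then obtain w w' where w: "w \<in> X2 - X1" "w' \<in> X2 - X1" "w \<noteq> w'"
    by (rule card_ge_2_obtain)
  obtain x where x: "x \<in> X1 - X2" "F {x, w} = ?b" "F {x, w'} = ?b"
    using XF_pair_common_vertex[OF X1 X2 ne own own] w by metis
  have "F {w, w'} = ?b" "F {w, z} = ?b" "F {w', z} = ?b"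
    using XF_edge_color[OF X2] w z by auto
  moreover have "F {x, z} = ?a"
    using XF_edge_color[OF X1] x z by auto
  ultimately show False
    using no_K31_aab[of w w' z x ?b] w x z ab XF_subset[OF X1] XF_subset[OF X2] by auto
qed

lemma XF_pair_own_color_unique:
  assumes X1: "X1 \<in> XF c V F" and X2: "X2 \<in> XF c V F" and ne: "X1 \<noteq> X2"
    and y: "y \<in> X2" "y' \<in> X2"
    and "almost_joined X1 y (set_color F X2)" "almost_joined X1 y' (set_color F X2)"
  shows "y = y'"
proof -
  obtain x where x: "x \<in> X1 - X2" "F {x, y} = set_color F X2" "F {x, y'} = set_color F X2"
    using XF_pair_common_vertex[OF X1 X2 ne assms(6,7)] by blast
  then show ?thesis
    using XF_outside_own_color_unique[OF X2 _ _ y] XF_subset[OF X1] by (auto simp: insert_commute)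
qed

lemma XF_pair_colors_agree:
  assumes X1: "X1 \<in> XF c V F" and X2: "X2 \<in> XF c V F" and ne: "X1 \<noteq> X2"
    and y: "y \<in> X2" "y' \<in> X2"
    and "almost_joined X1 y d" "almost_joined X1 y' d'"
    and "d \<noteq> set_color F X2" "d' \<noteq> set_color F X2"
  shows "d = d'"
proof -
  obtain x where x: "x \<in> X1 - X2" "F {x, y} = d" "F {x, y'} = d'"
    using XF_pair_common_vertex[OF X1 X2 ne assms(6,7)] by blast
  obtain d2 where d2: "\<forall>w\<in>X2. F {w, x} \<in> {d2, set_color F X2}"
    using XF_outside_vertex[OF X2, of x] x XF_subset[OF X1] by blast
  have "F {x, y} \<in> {d2, set_color F X2}" "F {x, y'} \<in> {d2, set_color F X2}"
    using d2 y by (metis insert_commute)+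
  then show ?thesis
    using x assms(8,9) by auto
qed

lemma XF_pair_exceptional_card:
  assumes X1: "X1 \<in> XF c V F" and X2: "X2 \<in> XF c V F" and ne: "X1 \<noteq> X2"
  shows "card ((X1 \<inter> X2) \<union> {y\<in>X2 - X1. almost_joined X1 y (set_color F X2)}) \<le> 1"
proof (cases "X1 \<inter> X2 = {}")
  case True
  have "y = y'"
    if "y \<in> X2" "y' \<in> X2" "almost_joined X1 y (set_color F X2)" "almost_joined X1 y' (set_color F X2)"
    for y y'
    using XF_pair_own_color_unique[OF X1 X2 ne that] .
  then show ?thesis
    using True card_le_Suc0_iff_eq[of "{y\<in>X2 - X1. almost_joined X1 y (set_color F X2)}"]
      XF_finite[OF X2] by auto
next
  case False
  then have "set_color F X1 = set_color F X2"
    using XF_overlap_same_color[OF X1 X2] by blast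
  then have "{y\<in>X2 - X1. almost_joined X1 y (set_color F X2)} = {}"
    using XF_outside_not_almost_joined_own[OF X1] XF_subset[OF X2] by auto
  then show ?thesis
    using XF_Int_card[OF X1 X2 ne] by (simp only: Un_empty_right)
qed

lemma XF_pair_structure:
  assumes X1: "X1 \<in> XF c V F" and X2: "X2 \<in> XF c V F" and ne: "X1 \<noteq> X2"
  obtains D B where "D \<noteq> set_color F X1" "D \<in> {1..c}" "B \<subseteq> X2 - X1" "card (X2 - B) \<le> 1"
    "\<forall>y\<in>B. almost_joined X1 y D"
proof -
  let ?a = "set_color F X1" and ?b = "set_color F X2"
  have "\<forall>y\<in>X2 - X1. \<exists>d. d \<noteq> ?a \<and> d \<in> {1..c} \<and> almost_joined X1 y d"
    using XF_outside_vertex[OF X1] XF_subset[OF X2] by (metis DiffE subsetD)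
  then obtain col where col: "\<forall>y\<in>X2 - X1. col y \<noteq> ?a \<and> col y \<in> {1..c} \<and> almost_joined X1 y (col y)"
    by metis
  define B where "B = {y\<in>X2 - X1. col y \<noteq> ?b}"
  have B_sub: "B \<subseteq> X2 - X1"
    unfolding B_def by blast
  have exceptional: "X2 - B \<subseteq> (X1 \<inter> X2) \<union> {y\<in>X2 - X1. almost_joined X1 y ?b}"
  proof
    fix y
    assume y: "y \<in> X2 - B"
    show "y \<in> (X1 \<inter> X2) \<union> {y\<in>X2 - X1. almost_joined X1 y ?b}"
    proof (cases "y \<in> X1")
      case False
      then have "y \<in> X2 - X1" "col y = ?b"
        using y unfolding B_def by auto
      then show ?thesis
        using col by (metis (mono_tags, lifting) UnI2 mem_Collect_eq)
    qed (use y in blast)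
  qed
  have "finite ((X1 \<inter> X2) \<union> {y\<in>X2 - X1. almost_joined X1 y ?b})"
    using XF_finite[OF X2] by (rule finite_subset[rotated]) blast
  then have card_B: "card (X2 - B) \<le> 1"
    using XF_pair_exceptional_card[OF X1 X2 ne] card_mono[OF _ exceptional] by linarith
  then have "B \<noteq> {}"
    using XF_card[OF X2] by auto
  then obtain y0 where y0: "y0 \<in> B" by blast
  have "almost_joined X1 y (col y0)" if y: "y \<in> B" for y
  proof -
    have "col y = col y0"
      using XF_pair_colors_agree[OF X1 X2 ne, of y y0 "col y" "col y0"] col y y0 B_sub
      unfolding B_def by blast
    then show ?thesis
      using col y B_sub by (metis subsetD)
  qed
  moreover have "col y0 \<noteq> ?a" "col y0 \<in> {1..c}"
    using col y0 B_sub by auto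
  ultimately show thesis
    using that B_sub card_B by blast
qed

subsection \<open>Majority colours at members of \<open>X\<^sub>F\<close>\<close>

lemma maj_color_XF_vertex:
  assumes X: "X \<in> XF c V F" and y: "y \<notin> X" and d: "d \<in> {1..c}" "almost_joined X y d"
  shows "maj_color c F X {y} = Some d"
proof (rule maj_color_eqI[OF d(1)], intro ballI impI)
  fix k
  assume "k \<in> {1..c}" "k \<noteq> d"
  have cross: "cross_count F X {y} j = card {x\<in>X. F {x, y} = j}" for j
    using cross_count_disjoint[of X "{y}"] XF_finite[OF X] y by simp
  show "cross_count F X {y} k < cross_count F X {y} d"
    unfolding cross using almost_joined_card[OF XF_finite[OF X] d(2)] \<open>k \<noteq> d\<close> XF_card[OF X]
    by fastforce
qed

lemma cross_count_other_le:
  assumes fin: "finite X1" "finite X2"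
    and B: "B \<subseteq> X2" "card (X2 - B) \<le> 1" "\<forall>y\<in>B. almost_joined X1 y D" and "k \<noteq> D"
  shows "cross_count F X1 X2 k \<le> card X2 + card X1"
proof -
  have "cross_count F X1 X2 k \<le> (\<Sum>y\<in>X2. card {x\<in>X1. F {x, y} = k})"
    using cross_count_le_sum fin by blast
  also have "\<dots> = (\<Sum>y\<in>X2 - B. card {x\<in>X1. F {x, y} = k}) + (\<Sum>y\<in>B. card {x\<in>X1. F {x, y} = k})"
    using sum.subset_diff[OF B(1) fin(2)] by simp
  also have "\<dots> \<le> card (X2 - B) * card X1 + card B * 1"
  proof (rule add_mono)
    show "(\<Sum>y\<in>X2 - B. card {x\<in>X1. F {x, y} = k}) \<le> card (X2 - B) * card X1"
      using sum_bounded_above[of "X2 - B" "\<lambda>y. card {x\<in>X1. F {x, y} = k}" "card X1"]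
        card_mono[OF fin(1)] by simp
    show "(\<Sum>y\<in>B. card {x\<in>X1. F {x, y} = k}) \<le> card B * 1"
      using sum_bounded_above[of B "\<lambda>y. card {x\<in>X1. F {x, y} = k}" 1]
        almost_joined_card(2)[OF fin(1)] B(3) \<open>k \<noteq> D\<close> by (simp add: One_nat_def) blast
  qed
  also have "\<dots> \<le> card X2 + card X1"
  proof -
    have "card (X2 - B) * card X1 \<le> card X1"
      using B(2) mult_le_mono1[of "card (X2 - B)" 1 "card X1"] by simp
    moreover have "card B \<le> card X2"
      using card_mono[OF fin(2) B(1)] .
    ultimately show ?thesis
      by linarith
  qed
  finally show ?thesis .
qed

lemma cross_count_main_ge:
  assumes fin: "finite X1" "finite X2"
    and B: "B \<subseteq> X2 - X1" "\<forall>y\<in>B. almost_joined X1 y D"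
  shows "card B * (card (X1 - X2) - 1) \<le> cross_count F X1 X2 D"
proof -
  have fin': "finite (X1 - X2)" "finite B" "(X1 - X2) \<inter> B = {}"
    using fin B(1) finite_subset by auto
  have "card B * (card (X1 - X2) - 1) \<le> (\<Sum>y\<in>B. card {x\<in>X1 - X2. F {x, y} = D})"
  proof -
    have "card (X1 - X2) - 1 \<le> card {x\<in>X1 - X2. F {x, y} = D}" if "y \<in> B" for y
      using almost_joined_card(1)[OF fin'(1)] almost_joined_subset[of X1 y D] B(2) that by blast
    then show ?thesis
      using sum_bounded_below[of B "card (X1 - X2) - 1" "\<lambda>y. card {x\<in>X1 - X2. F {x, y} = D}"]
      by simp
  qed
  also have "\<dots> = cross_count F (X1 - X2) B D"
    using cross_count_disjoint[OF fin'] by (rule sym)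
  also have "\<dots> \<le> cross_count F X1 X2 D"
    by (rule cross_count_mono) (use B(1) fin in auto)
  finally show ?thesis .
qed

lemma maj_color_XF_pair:
  assumes X1: "X1 \<in> XF c V F" and X2: "X2 \<in> XF c V F" and ne: "X1 \<noteq> X2"
    and D: "D \<in> {1..c}"
    and B: "B \<subseteq> X2 - X1" "card (X2 - B) \<le> 1" "\<forall>y\<in>B. almost_joined X1 y D"
  shows "maj_color c F X1 X2 = Some D"
proof (rule maj_color_eqI[OF D], intro ballI impI)
  fix k
  assume "k \<in> {1..c}" "k \<noteq> D"
  let ?m = "card X1" and ?n = "card X2"
  have fin: "finite X1" "finite X2"
    using XF_finite[OF X1] XF_finite[OF X2] by auto
  have "B \<subseteq> X2"
    using B(1) by blast
  have "cross_count F X1 X2 k \<le> ?n + ?m"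
    using cross_count_other_le[OF fin \<open>B \<subseteq> X2\<close> B(2,3) \<open>k \<noteq> D\<close>] .
  also have "\<dots> < (?n - 1) * (?m - 2)"
  proof -
    obtain n' m' where "?n = n' + 6" "?m = m' + 6"
      using XF_card[OF X1] XF_card[OF X2] by (metis add.commute le_Suc_ex max.bounded_iff)
    then show ?thesis
      by (simp add: algebra_simps)
  qed
  also have "\<dots> \<le> card B * (card (X1 - X2) - 1)"
  proof (rule mult_mono)
    show "?n - 1 \<le> card B"
      using card_Diff_subset[of B X2] \<open>B \<subseteq> X2\<close> B(2) fin(2) finite_subset by fastforce
  qed (use XF_Diff_card[OF X1 X2 ne] in auto)
  also have "\<dots> \<le> cross_count F X1 X2 D"
    using cross_count_main_ge[OF fin B(1,3)] .
  finally show "cross_count F X1 X2 k < cross_count F X1 X2 D" .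
qed

subsection \<open>Cliques of \<open>E\<^sub>F\<close>\<close>

lemma YF_iff: "{y} \<in> YF c V F \<longleftrightarrow> y \<in> V \<and> (\<forall>X\<in>XF c V F. y \<notin> X)"
  unfolding YF_def by auto

lemma VE_cases:
  assumes "v \<in> VE c V F"
  obtains "v \<in> XF c V F" | y where "v = {y}" "{y} \<in> YF c V F"
  using assms unfolding VE_def YF_def by blast

lemma VE_subset: "v \<in> VE c V F \<Longrightarrow> v \<subseteq> V"
  by (cases rule: VE_cases) (auto simp: YF_iff dest: XF_subset)

lemma XF_in_VE: "X \<in> XF c V F \<Longrightarrow> X \<in> VE c V F"
  unfolding VE_def by simp

lemma XF_notin_YF: "X \<in> XF c V F \<Longrightarrow> X \<notin> YF c V F"
  using XF_card unfolding YF_def by fastforce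

lemma EF_commute: "EF c V F v1 v2 = EF c V F v2 v1"
  unfolding EF_def using maj_color_commute by (auto simp: Un_commute)

lemma EF_loopD: "EF c V F v v = Some i \<Longrightarrow> v \<in> XF c V F \<and> set_color F v = i"
  unfolding EF_def by (auto split: if_splits)

lemma EF_XF: "X \<in> XF c V F \<Longrightarrow> v \<noteq> X \<Longrightarrow> EF c V F X v = maj_color c F X v"
  unfolding EF_def using XF_notin_YF by auto

lemma EF_YF:
  "{y1} \<in> YF c V F \<Longrightarrow> {y2} \<in> YF c V F \<Longrightarrow> y1 \<noteq> y2 \<Longrightarrow> EF c V F {y1} {y2} = Some (F {y1, y2})"
  unfolding EF_def by (auto simp: insert_commute)

lemma EF_XF_SomeD:
  assumes X: "X \<in> XF c V F" and v: "v \<in> VE c V F" "v \<noteq> X" and i: "EF c V F X v = Some i"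
  obtains B where "i \<noteq> set_color F X" "almost_all B v" "B \<inter> X = {}" "\<forall>y\<in>B. almost_joined X y i"
  using v(1)
proof (cases rule: VE_cases)
  case 1
  obtain D B where D: "D \<noteq> set_color F X" "D \<in> {1..c}" and B: "B \<subseteq> v - X" "card (v - B) \<le> 1"
    "\<forall>y\<in>B. almost_joined X y D"
    using XF_pair_structure[OF X 1 v(2)[symmetric]] by blast
  have "i = D"
    using maj_color_XF_pair[OF X 1 v(2)[symmetric] D(2) B] i EF_XF[OF X v(2)] by simp
  moreover have "almost_all B v"
    using B XF_card[OF 1] unfolding almost_all_def by auto
  ultimately show thesis
    using that D B by blast
next
  case (2 y)
  then have y: "y \<in> V" "y \<notin> X"
    using X YF_iff by auto
  obtain d where d: "d \<noteq> set_color F X" "d \<in> {1..c}" "almost_joined X y d"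
    using XF_outside_vertex[OF X y] by blast
  have "i = d"
    using maj_color_XF_vertex[OF X y(2) d(2,3)] i EF_XF[OF X v(2)] 2 by simp
  then show thesis
    using that[of "{y}"] d y 2 unfolding almost_all_def by auto
qed

lemma VE_card: "v \<in> VE c V F \<Longrightarrow> finite v \<and> card v \<noteq> 2"
  by (cases rule: VE_cases) (auto dest: XF_finite XF_card)

lemma EF_XF_edge:
  assumes q: "q \<in> XF c V F" and r: "r \<in> VE c V F" "r \<noteq> q" and i: "EF c V F q r = Some i"
    and Bq: "almost_all Bq q" and Br: "almost_all Br r"
  shows "\<exists>yq\<in>Bq. \<exists>yr\<in>Br. yq \<noteq> yr \<and> F {yq, yr} = i"
proof -
  obtain B where B: "almost_all B r" "B \<inter> q = {}" "\<forall>y\<in>B. almost_joined q y i"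
    using EF_XF_SomeD[OF q r i] by blast
  obtain yr where yr: "yr \<in> B" "yr \<in> Br"
    using almost_all_Int[OF _ _ B(1) Br] VE_card[OF r(1)] by blast
  obtain e where e: "\<forall>x\<in>q - {e}. F {x, yr} = i"
    using B(3) yr(1) unfolding almost_joined_def by blast
  have "card {e} < card Bq"
    using almost_all_card[OF XF_finite[OF q] Bq] XF_card[OF q] by simp
  then obtain yq where "yq \<in> Bq" "yq \<noteq> e"
    using card_less_ex_not_in[of "{e}" Bq] by auto
  moreover have "yq \<in> q" "yr \<notin> q"
    using calculation Bq B(2) yr(1) unfolding almost_all_def by auto
  ultimately have "yq \<noteq> yr" "F {yq, yr} = i"
    using e by auto
  then show ?thesis
    using \<open>yq \<in> Bq\<close> yr(2) by blast
qed

lemma EF_edge: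
  assumes q: "q \<in> VE c V F" and r: "r \<in> VE c V F" "r \<noteq> q" and i: "EF c V F q r = Some i"
    and Bq: "almost_all Bq q" and Br: "almost_all Br r"
  shows "\<exists>yq\<in>Bq. \<exists>yr\<in>Br. yq \<noteq> yr \<and> F {yq, yr} = i"
proof (cases "q \<in> XF c V F")
  case True
  then show ?thesis
    using EF_XF_edge r i Bq Br by blast
next
  case q_notin: False
  show ?thesis
  proof (cases "r \<in> XF c V F")
    case True
    have "EF c V F r q = Some i"
      using i EF_commute by metis
    then show ?thesis
      using EF_XF_edge[OF True q r(2)[symmetric] _ Br Bq] by (metis insert_commute)
  next
    case False
    obtain yq yr where "q = {yq}" "{yq} \<in> YF c V F" "r = {yr}" "{yr} \<in> YF c V F"
      using q r q_notin False by (metis VE_cases)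
    moreover have "Bq = {yq}" "Br = {yr}"
      using Bq Br calculation almost_all_singleton by metis+
    ultimately show ?thesis
      using EF_YF[of yq yr] i r(2) by auto
  qed
qed

lemma EF_XF_not_own_color:
  assumes "X \<in> XF c V F" "v \<in> VE c V F" "v \<noteq> X"
  shows "EF c V F X v \<noteq> Some (set_color F X)"
  using EF_XF_SomeD[OF assms] by blast

lemma EF_no_proper_triangle_XF:
  assumes p: "p \<in> XF c V F" and q: "q \<in> VE c V F" and r: "r \<in> VE c V F"
    and ne: "q \<noteq> p" "r \<noteq> p" "q \<noteq> r"
    and i: "EF c V F p q = Some i" "EF c V F p r = Some i" "EF c V F q r = Some i"
  shows False
proof -
  obtain Bq where Bq: "i \<noteq> set_color F p" "almost_all Bq q" "Bq \<inter> p = {}"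
    "\<forall>y\<in>Bq. almost_joined p y i"
    using EF_XF_SomeD[OF p q ne(1) i(1)] by blast
  obtain Br where Br: "almost_all Br r" "Br \<inter> p = {}" "\<forall>y\<in>Br. almost_joined p y i"
    using EF_XF_SomeD[OF p r ne(2) i(2)] by blast
  obtain yq yr where y: "yq \<in> Bq" "yr \<in> Br" "yq \<noteq> yr" "F {yq, yr} = i"
    using EF_edge[OF q r ne(3)[symmetric] i(3) Bq(2) Br(1)] by blast
  have "card p - 2 \<le> card {x\<in>p. F {x, yq} = i \<and> F {x, yr} = i}"
    using almost_joined_common XF_finite[OF p] Bq(4) Br(3) y by blast
  then have "2 \<le> card {x\<in>p. F {x, yq} = i \<and> F {x, yr} = i}"
    using XF_card[OF p] by simp
  then obtain x x' where x: "x \<in> p" "x' \<in> p" "x \<noteq> x'"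
    "F {x, yq} = i" "F {x, yr} = i" "F {x', yq} = i" "F {x', yr} = i"
    by (rule card_ge_2_obtain) blast
  have "yq \<notin> p" "yr \<notin> p" "yq \<in> V" "yr \<in> V"
    using y Bq(2,3) Br(1,2) VE_subset[OF q] VE_subset[OF r] unfolding almost_all_def by auto
  moreover have "F {x', x} \<noteq> i"
    using XF_edge_color[OF p x(2,1)] x(3) Bq(1) by simp
  ultimately show False
    using no_K31_aab[of yq yr x x' i] x y XF_subset[OF p] by (auto simp: insert_commute)
qed

lemma EF_triangle_XF:
  assumes p: "p \<in> XF c V F" and q: "q \<in> VE c V F" and r: "r \<in> VE c V F"
    and i: "EF c V F p q = Some i" "EF c V F p r = Some i" "EF c V F q r = Some i"
  shows "q = p \<and> r = p"
proof (rule ccontr)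
  assume "\<not> (q = p \<and> r = p)"
  then consider "q = p" "r \<noteq> p" | "r = p" "q \<noteq> p" | "q \<noteq> p" "r \<noteq> p" "q = r"
    | "q \<noteq> p" "r \<noteq> p" "q \<noteq> r"
    by blast
  then show False
  proof cases
    case 1
    then show False
      using EF_loopD[of p i] EF_XF_not_own_color[OF p r] i by auto
  next
    case 2
    then show False
      using EF_loopD[of p i] EF_XF_not_own_color[OF p q] i by auto
  next
    case 3
    then have "q \<in> XF c V F" "set_color F q = i"
      using EF_loopD i(3) by auto
    moreover have "EF c V F q p = Some i"
      using i(1) EF_commute by metis
    ultimately show False
      using EF_XF_not_own_color[OF _ XF_in_VE[OF p]] 3 by auto
  next
    case 4
    then show False
      using EF_no_proper_triangle_XF[OF p q r] i by blast
  qed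
qed

lemma YF_mono_set_card:
  assumes S: "\<forall>y\<in>S. {y} \<in> YF c V F" "mono_set F S"
  shows "card S < max (c + 1) 6"
proof (rule ccontr)
  assume big: "\<not> card S < max (c + 1) 6"
  have "S \<subseteq> V"
    using S(1) YF_iff by blast
  moreover have card_S: "max (c + 1) 6 \<le> card S"
    using big by simp
  ultimately obtain X where X: "X \<in> XF c V F" "S \<subseteq> X"
    using mono_set_extends_to_XF S(2) by blast
  have "S \<noteq> {}"
    using card_S by auto
  then obtain y where "y \<in> S"
    by blast
  then show False
    using X S(1) YF_iff by blast
qed

lemma embeds_XF_constant:
  assumes emb: "embeds c V F t i \<phi>" and t: "3 \<le> t" and u: "u \<in> {1..t}" "\<phi> u \<in> XF c V F"
  shows "\<forall>w\<in>{1..t}. \<phi> w = \<phi> u"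
proof
  fix w
  assume w: "w \<in> {1..t}"
  have "card {u, w} < card {1..t}"
    using t by (simp add: card_insert_if)
  then obtain z where z: "z \<in> {1..t}" "z \<notin> {u, w}"
    using card_less_ex_not_in[of "{u, w}" "{1..t}"] by auto
  show "\<phi> w = \<phi> u"
  proof (cases "w = u")
    case False
    then show ?thesis
      using EF_triangle_XF[OF u(2), of "\<phi> w" "\<phi> z" i] emb u w z unfolding embeds_def by auto
  qed simp
qed

lemma embeds_triangle_constant:
  assumes "embeds c V F 3 i \<phi>" "\<exists>u\<in>{1..3}. \<phi> u \<in> XF c V F"
  shows "\<exists>v. \<forall>u\<in>{1..3}. \<phi> u = v"
  using embeds_XF_constant[OF assms(1)] assms(2) by blast

lemma embeds_large_clique_meets_XF:
  assumes emb: "embeds c V F (max (c + 1) 6) i \<phi>"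
  shows "\<exists>u\<in>{1..max (c + 1) 6}. \<phi> u \<in> XF c V F"
proof (rule ccontr)
  let ?T = "{1..max (c + 1) 6}"
  assume no_XF: "\<not> ?thesis"
  have "\<forall>u\<in>?T. \<exists>y. \<phi> u = {y} \<and> {y} \<in> YF c V F"
    using emb no_XF VE_cases unfolding embeds_def by metis
  then obtain y where y: "\<forall>u\<in>?T. \<phi> u = {y u} \<and> {y u} \<in> YF c V F"
    by metis
  have edge: "F {y u, y w} = i" "y u \<noteq> y w" if "u \<in> ?T" "w \<in> ?T" "u \<noteq> w" for u w
  proof -
    have i: "EF c V F (\<phi> u) (\<phi> w) = Some i"
      using emb that unfolding embeds_def by blast
    moreover have "\<phi> u \<notin> XF c V F"
      using no_XF that by blast
    ultimately show "y u \<noteq> y w"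
      using EF_loopD y that by metis
    then show "F {y u, y w} = i"
      using EF_YF y that i by auto
  qed
  have "mono_set F (y ` ?T)"
    unfolding mono_set_def
  proof (intro exI[of _ i] allI impI)
    fix e
    assume "e \<subseteq> y ` ?T \<and> card e = 2"
    then obtain u w where "u \<in> ?T" "w \<in> ?T" "e = {y u, y w}" "y u \<noteq> y w"
      unfolding card_2_iff by auto
    then show "F e = i"
      using edge(1) by metis
  qed
  moreover have "card (y ` ?T) = max (c + 1) 6"
    using card_image[of y ?T] edge(2) unfolding inj_on_def by fastforce
  ultimately show False
    using YF_mono_set_card[of "y ` ?T"] y by auto
qed

lemma embeds_large_clique_constant:
  assumes emb: "embeds c V F (max (c + 1) 6) i \<phi>"
  shows "\<exists>v. \<forall>u\<in>{1..max (c + 1) 6}. \<phi> u = v"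
proof -
  obtain u where u: "u \<in> {1..max (c + 1) 6}" "\<phi> u \<in> XF c V F"
    using embeds_large_clique_meets_XF[OF emb] by blast
  have "3 \<le> max (c + 1) 6"
    by simp
  then have "\<forall>w\<in>{1..max (c + 1) 6}. \<phi> w = \<phi> u"
    using embeds_XF_constant[OF emb _ u] by blast
  then show ?thesis
    by blast
qed

end

theorem claim5p5:
  fixes c :: nat and V :: "'a set" and F :: "'a set \<Rightarrow> nat"
  assumes "c \<ge> 2" and "standard c V F"
  shows "\<forall>i\<in>{1..c}.
     (\<forall>\<phi>. embeds c V F (max (c + 1) 6) i \<phi> \<longrightarrow>
        (\<exists>v. \<forall>u\<in>{1..max (c + 1) 6}. \<phi> u = v)) \<and>
     (\<forall>\<phi>. embeds c V F 3 i \<phi> \<and> (\<exists>u\<in>{1..3}. \<phi> u \<in> XF c V F) \<longrightarrow>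
        (\<exists>v. \<forall>u\<in>{1..3}. \<phi> u = v))"
proof -
  interpret standard_coloring c V F
    using assms(2) by unfold_locales
  show ?thesis
  proof (intro ballI conjI allI impI)
    fix i \<phi>
    assume "embeds c V F (max (c + 1) 6) i \<phi>"
    then show "\<exists>v. \<forall>u\<in>{1..max (c + 1) 6}. \<phi> u = v"
      by (rule embeds_large_clique_constant)
  next
    fix i \<phi>
    assume "embeds c V F 3 i \<phi> \<and> (\<exists>u\<in>{1..3}. \<phi> u \<in> XF c V F)"
    then show "\<exists>v. \<forall>u\<in>{1..3}. \<phi> u = v"
      using embeds_triangle_constant by blast
  qed
qed

end
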